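(* Let $f\in\mathbb{Z}_2[x]$, $n\ge2$, and let $\sigma=(x_1,\dots,x_k)$ be a growing $k$-cycle of $f_n$, with representatives $x_i\in\mathbb{Z}_2$. Put $a_n(x)=(f^k)'(x)$, $b_n(x)=(f^k(x)-x)/2^n$, $a_{n+1}(x)=(f^{2k})'(x)$, $b_{n+1}(x)=(f^{2k}(x)-x)/2^{n+1}$. Then for all $1\le i\le k$ and $t\in\{0,1\}$, $$a_{n+1}(x_i)\equiv1\pmod4,\qquad 2\,b_{n+1}(x_i+2^nt)\equiv b_n(x_i)\big(1+a_n(x_i)\big)\pmod4.$$
   Context: $f_n$ is the induced map on $\mathbb{Z}/2^n\mathbb{Z}$, $f_n(x\bmod 2^n)=f(x)\bmod 2^n$. A $k$-cycle of $f_n$ is a tuple of distinct elements $x_1,\dots,x_k$ with $f_n(x_i)=x_{i+1}$, $f_n(x_k)=x_1$; it grows if $\{y\in\mathbb{Z}/2^{n+1}\mathbb{Z}:y\bmod 2^n\in\sigma\}$ is a single cycle of $f_{n+1}$, of length $2k$. *)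

theory Defs
  imports "HOL-Computational_Algebra.Polynomial"
begin

text \<open>A 2-adic integer is a compatible sequence of residues: its m-th component
is its residue modulo 2^m, normalised into {0..<2^m}.\<close>

typedef padic2 = "{x :: nat \<Rightarrow> int. \<forall>m. x (Suc m) mod 2 ^ m = x m}"
  morphisms digits Abs_padic2
  by (rule exI[of _ "\<lambda>_. 0"]) simp

setup_lifting type_definition_padic2

lemma padic2_inv_norm:
  assumes "\<forall>m. x (Suc m) mod (2::int) ^ m = x m"
  shows "x m mod 2 ^ m = x m"
proof -
  have "x m = x (Suc m) mod 2 ^ m" using assms by simp
  then show ?thesis by simp
qed

lemma padic2_mod_step: "(a::int) mod 2 ^ Suc m mod 2 ^ m = a mod 2 ^ m"
  by (simp add: mod_mod_cancel)

instantiation padic2 :: comm_ring_1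
begin

lift_definition zero_padic2 :: padic2 is "\<lambda>m. 0" by simp
lift_definition one_padic2 :: padic2 is "\<lambda>m. 1 mod 2 ^ m" using padic2_mod_step by blast
lift_definition plus_padic2 :: "padic2 \<Rightarrow> padic2 \<Rightarrow> padic2"
  is "\<lambda>x y m. (x m + y m) mod 2 ^ m"
  by (metis mod_add_eq padic2_mod_step)
lift_definition uminus_padic2 :: "padic2 \<Rightarrow> padic2"
  is "\<lambda>x m. (- x m) mod 2 ^ m"
  by (metis mod_minus_eq padic2_mod_step)
lift_definition minus_padic2 :: "padic2 \<Rightarrow> padic2 \<Rightarrow> padic2"
  is "\<lambda>x y m. (x m - y m) mod 2 ^ m"
  by (metis mod_diff_eq padic2_mod_step)
lift_definition times_padic2 :: "padic2 \<Rightarrow> padic2 \<Rightarrow> padic2"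
  is "\<lambda>x y m. (x m * y m) mod 2 ^ m"
  by (metis mod_mult_eq padic2_mod_step)

instance
proof
  fix a b c :: padic2
  show "a + b + c = a + (b + c)"
    by transfer (simp add: mod_simps add.assoc)
  show "a + b = b + a"
    by transfer (simp add: add.commute)
  show "0 + a = a"
    by transfer (simp add: padic2_inv_norm)
  show "- a + a = 0"
    by transfer (simp add: mod_simps)
  show "a - b = a + - b"
    by transfer (simp add: mod_simps)
  show "a * b * c = a * (b * c)"
    by transfer (simp add: mod_simps mult.assoc)
  show "a * b = b * a"
    by transfer (simp add: mult.commute)
  show "1 * a = a"
    proof transfer
    fix a :: "nat \<Rightarrow> int"
    assume h: "\<forall>m. a (Suc m) mod 2 ^ m = a m"
    show "(\<lambda>m. 1 mod 2 ^ m * a m mod 2 ^ m) = a"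
    proof
      fix m
      have "1 mod 2 ^ m * a m mod 2 ^ m = (1 * a m) mod (2::int) ^ m"
        by (rule mod_mult_left_eq)
      then show "1 mod 2 ^ m * a m mod 2 ^ m = a m"
        using padic2_inv_norm[OF h] by simp
    qed
  qed
  show "(a + b) * c = a * c + b * c"
    proof transfer
    fix a b c :: "nat \<Rightarrow> int"
    show "(\<lambda>m. (a m + b m) mod 2 ^ m * c m mod 2 ^ m) =
      (\<lambda>m. (a m * c m mod 2 ^ m + b m * c m mod 2 ^ m) mod 2 ^ m)"
    proof
      fix m
      have "(a m + b m) mod 2 ^ m * c m mod 2 ^ m = ((a m + b m) * c m) mod (2::int) ^ m"
        by (rule mod_mult_left_eq)
      also have "\<dots> = (a m * c m + b m * c m) mod 2 ^ m"
        by (simp add: distrib_right)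
      also have "\<dots> = (a m * c m mod 2 ^ m + b m * c m mod 2 ^ m) mod 2 ^ m"
        by (rule mod_add_eq[symmetric])
      finally show "(a m + b m) mod 2 ^ m * c m mod 2 ^ m =
        (a m * c m mod 2 ^ m + b m * c m mod 2 ^ m) mod 2 ^ m" .
    qed
  qed
  show "(0::padic2) \<noteq> 1"
    by transfer (auto simp: fun_eq_iff intro!: exI[of _ 1])
qed

end

definition res2 :: "nat \<Rightarrow> padic2 \<Rightarrow> int" where
  "res2 n x = digits x n"

text \<open>The induced map f_n on Z/2^n Z, residues represented by integers in {0..<2^n}.\<close>
definition fmod :: "padic2 poly \<Rightarrow> nat \<Rightarrow> int \<Rightarrow> int" where
  "fmod f n r = res2 n (poly f (of_int r))"

definition is_cycle :: "padic2 poly \<Rightarrow> nat \<Rightarrow> nat \<Rightarrow> (nat \<Rightarrow> int) \<Rightarrow> bool" where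
  "is_cycle f n k x \<longleftrightarrow> k \<ge> 1 \<and> (\<forall>i<k. 0 \<le> x i \<and> x i < 2 ^ n) \<and> inj_on x {..<k} \<and>
     (\<forall>i<k. fmod f n (x i) = x (Suc i mod k))"

definition grows :: "padic2 poly \<Rightarrow> nat \<Rightarrow> nat \<Rightarrow> (nat \<Rightarrow> int) \<Rightarrow> bool" where
  "grows f n k x \<longleftrightarrow> (\<exists>y. is_cycle f (Suc n) (2 * k) y \<and>
     y ` {..<2 * k} = {z. 0 \<le> z \<and> z < 2 ^ Suc n \<and> z mod 2 ^ n \<in> x ` {..<k}})"

definition piter :: "padic2 poly \<Rightarrow> nat \<Rightarrow> padic2 poly" where
  "piter f k = ((\<lambda>p. pcompose f p) ^^ k) [:0, 1:]"

text \<open>Formal derivative of a polynomial (the library's pderiv needs a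
no-zero-divisors class instance; this is its coefficientwise definition).\<close>
definition fderiv :: "padic2 poly \<Rightarrow> padic2 poly" where
  "fderiv p = (\<Sum>i<degree p. monom (of_nat (Suc i) * coeff p (Suc i)) i)"

definition div2pow :: "padic2 \<Rightarrow> nat \<Rightarrow> padic2" where
  "div2pow a n = (THE b. 2 ^ n * b = a)"

end

theory Submission
  imports Defs
begin

text \<open>Write \<open>g = f\<^sup>k\<close> and \<open>h = 2\<^sup>n\<close>. Every lift \<open>z\<close> of a point of the cycle satisfies
\<open>g z \<equiv> z (mod h)\<close>, and since the cycle grows, neither \<open>z\<close> nor \<open>z + h\<close> is fixed by \<open>g\<close>
modulo \<open>2h\<close>; the expansion \<open>g (z + h) \<equiv> g z + h g'(z) (mod h\<^sup>2)\<close> then forces \<open>g'(z)\<close> to be odd.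
By the chain rule \<open>(g \<circ> g)'(z) = g'(g z) g'(z) \<equiv> g'(z)\<^sup>2 \<equiv> 1 (mod 4)\<close>. Expanding \<open>g\<close> twice to
second order at \<open>y = z + h t\<close> gives \<open>g (g y) - y \<equiv> h c (1 + g'(y)) (mod h\<^sup>2)\<close> with
\<open>c \<equiv> b\<^sub>n(z) + t (g'(z) - 1) (mod h)\<close>; the correction \<open>t (g'(z) - 1)(1 + g'(z))\<close> vanishes
modulo 4 because \<open>g'(z)\<close> is odd.\<close>

section \<open>Residues of 2-adic integers\<close>

lemma digits_mod_two_power: "digits a (Suc m) mod 2 ^ m = digits a m"
  using digits[of a] by simp

lemma digits_bounds: "0 \<le> digits a m \<and> digits a m < 2 ^ m"
proof -
  have "digits a m = digits a (Suc m) mod 2 ^ m" by (simp add: digits_mod_two_power)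
  then show ?thesis by (simp add: pos_mod_sign pos_mod_bound)
qed

lemma digits_add_mod_two_power: "digits a (m + l) mod 2 ^ m = digits a m"
proof (induction l)
  case 0
  then show ?case using digits_bounds[of a m] by simp
next
  case (Suc l)
  have "digits a (m + Suc l) mod 2 ^ m = (digits a (Suc (m + l)) mod 2 ^ (m + l)) mod 2 ^ m"
    by (simp add: mod_mod_cancel power_add)
  also have "\<dots> = digits a m" using Suc digits_mod_two_power by simp
  finally show ?case .
qed

lemma res2_bounds: "0 \<le> res2 m a \<and> res2 m a < 2 ^ m"
  by (simp add: res2_def digits_bounds)

lemma res2_add: "res2 m (a + b) = (res2 m a + res2 m b) mod 2 ^ m"
  by (simp add: res2_def plus_padic2.rep_eq)

lemma res2_diff: "res2 m (a - b) = (res2 m a - res2 m b) mod 2 ^ m"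
  by (simp add: res2_def minus_padic2.rep_eq)

lemma res2_mult: "res2 m (a * b) = (res2 m a * res2 m b) mod 2 ^ m"
  by (simp add: res2_def times_padic2.rep_eq)

lemma res2_uminus: "res2 m (- a) = (- res2 m a) mod 2 ^ m"
  by (simp add: res2_def uminus_padic2.rep_eq)

lemma res2_zero: "res2 m 0 = 0"
  by (simp add: res2_def zero_padic2.rep_eq)

lemma res2_one: "res2 m 1 = 1 mod 2 ^ m"
  by (simp add: res2_def one_padic2.rep_eq)

lemma res2_of_nat: "res2 m (of_nat n) = int n mod 2 ^ m"
proof (induction n)
  case 0
  then show ?case by (simp add: res2_zero)
next
  case (Suc n)
  have "res2 m (of_nat (Suc n)) = res2 m (1 + of_nat n)" by simp
  also have "\<dots> = (1 mod 2 ^ m + int n mod 2 ^ m) mod 2 ^ m" by (simp add: res2_add res2_one Suc)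
  also have "\<dots> = int (Suc n) mod 2 ^ m" by (simp add: mod_add_right_eq)
  finally show ?case .
qed

lemma res2_of_int: "res2 m (of_int r) = r mod 2 ^ m"
proof (cases r rule: int_cases)
  case (nonneg n)
  then show ?thesis by (simp add: res2_of_nat)
next
  case (neg n)
  have "res2 m (of_int r) = res2 m (- of_nat (Suc n))" using neg by simp
  also have "\<dots> = (- (int (Suc n) mod 2 ^ m)) mod 2 ^ m" by (simp only: res2_uminus res2_of_nat)
  also have "\<dots> = r mod 2 ^ m" using neg by (simp add: mod_minus_eq)
  finally show ?thesis .
qed

lemma res2_numeral: "res2 m (numeral w) = numeral w mod 2 ^ m"
  using res2_of_nat[of m "numeral w"] by simp

lemma res2_power: "res2 m (a ^ l) = res2 m a ^ l mod 2 ^ m"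
  by (induction l) (simp_all add: res2_one res2_mult mod_mult_right_eq)

lemma res2_two_power: "res2 m ((2::padic2) ^ m) = 0"
  by (simp add: res2_power res2_numeral power_mod)

lemma two_power_dvd_if_res2_eq_0:
  assumes "res2 m c = 0"
  shows "(2::padic2) ^ m dvd c"
proof -
  define D where "D = digits c"
  have D_mod: "D (j + m) mod 2 ^ m = 0" for j
    using digits_add_mod_two_power[of c m j] assms by (simp add: D_def res2_def add.commute)
  define E where "E j = D (j + m) div 2 ^ m" for j
  have D_shift: "D (j + m) = 2 ^ m * E j" for j
  proof -
    have "D (j + m) = 2 ^ m * (D (j + m) div 2 ^ m) + D (j + m) mod 2 ^ m"
      by (rule mult_div_mod_eq[symmetric])
    then show ?thesis using D_mod[of j] by (simp add: E_def)
  qed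
  have "E (Suc j) mod 2 ^ j = E j" for j
  proof -
    have "D (Suc (j + m)) mod 2 ^ (j + m) = D (j + m)"
      using digits_mod_two_power[of c "j + m"] by (simp add: D_def)
    then have "(2 ^ m * E (Suc j)) mod (2 ^ m * 2 ^ j) = 2 ^ m * E j"
      using D_shift[of j] D_shift[of "Suc j"] by (simp add: power_add mult.commute)
    then have "2 ^ m * (E (Suc j) mod 2 ^ j) = 2 ^ m * E j"
      by (simp only: mult_mod_right)
    then show ?thesis by simp
  qed
  then have digits_E: "digits (Abs_padic2 E) = E"
    by (simp add: Abs_padic2_inverse)
  have "c = 2 ^ m * Abs_padic2 E"
  proof (rule digits_inject[THEN iffD1], rule ext)
    fix j
    have "digits (2 ^ m * Abs_padic2 E) j = (res2 j (2 ^ m) * E j) mod 2 ^ j"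
      by (simp only: res2_def times_padic2.rep_eq digits_E)
    also have "\<dots> = (2 ^ m mod 2 ^ j * E j) mod 2 ^ j"
      by (simp only: res2_power res2_numeral power_mod)
    also have "\<dots> = D (j + m) mod 2 ^ j"
      by (simp add: mod_mult_left_eq D_shift)
    also have "\<dots> = digits c j" using digits_add_mod_two_power[of c j m] by (simp add: D_def)
    finally show "digits c j = digits (2 ^ m * Abs_padic2 E) j" by simp
  qed
  then show ?thesis by simp
qed

lemma two_power_dvd_iff_res2_eq_0: "(2::padic2) ^ m dvd c \<longleftrightarrow> res2 m c = 0"
proof
  assume "2 ^ m dvd c"
  then obtain d where "c = 2 ^ m * d" by blast
  then show "res2 m c = 0" by (simp add: res2_mult res2_two_power)
qed (rule two_power_dvd_if_res2_eq_0)

lemma two_power_dvd_diff_iff: "(2::padic2) ^ m dvd (a - b) \<longleftrightarrow> res2 m a = res2 m b"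
proof -
  have "(res2 m a - res2 m b) mod 2 ^ m = 0 \<longleftrightarrow> res2 m a = res2 m b"
    using res2_bounds[of m a] res2_bounds[of m b]
    by (metis mod_eq_dvd_iff mod_pos_pos_trivial dvd_eq_mod_eq_0)
  then show ?thesis by (simp add: two_power_dvd_iff_res2_eq_0 res2_diff)
qed

lemma eq_0_if_two_power_dvd:
  assumes "\<And>m. (2::padic2) ^ m dvd c"
  shows "c = 0"
proof -
  have "digits c m = digits 0 m" for m
    using assms[of m] by (simp add: zero_padic2.rep_eq two_power_dvd_iff_res2_eq_0 res2_def)
  then show ?thesis using digits_inject by blast
qed

lemma two_mult_eq_0_imp:
  assumes "2 * (a::padic2) = 0"
  shows "a = 0"
proof (rule eq_0_if_two_power_dvd)
  fix j
  have "res2 (Suc j) (2 * a) = (2 * digits a (Suc j)) mod 2 ^ Suc j"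
    by (simp only: res2_mult res2_numeral) (simp add: res2_def mod_mult_left_eq)
  then have "(2 * digits a (Suc j)) mod (2 * 2 ^ j) = 0"
    using assms by (simp add: res2_zero)
  then have "2 ^ j dvd digits a (Suc j)" by (simp add: dvd_eq_mod_eq_0 [symmetric])
  then show "2 ^ j dvd a"
    using digits_mod_two_power[of a j]
    by (simp add: two_power_dvd_iff_res2_eq_0 res2_def dvd_eq_mod_eq_0)
qed

lemma two_power_mult_cancel: "(2::padic2) ^ m * a = 2 ^ m * b \<Longrightarrow> a = b"
proof (induction m arbitrary: a b)
  case 0
  then show ?case by simp
next
  case (Suc m)
  then have "2 ^ m * (2 * a) = 2 ^ m * (2 * b)" by (simp add: mult.assoc mult.left_commute)
  then have "2 * (a - b) = 0" using Suc.IH by (simp add: right_diff_distrib)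
  then have "a - b = 0" by (rule two_mult_eq_0_imp)
  then show ?case by simp
qed

lemma div2pow_eq: "(2::padic2) ^ m * b = a \<Longrightarrow> div2pow a m = b"
  unfolding div2pow_def by (rule the_equality) (auto intro: two_power_mult_cancel)

lemma even_or_odd_padic2: "2 dvd (a::padic2) \<or> 2 dvd a - 1"
proof -
  have "res2 1 a = 0 \<or> res2 1 a = 1" using res2_bounds[of 1 a] by auto
  moreover have "res2 1 (0::padic2) = 0" "res2 1 (1::padic2) = 1" by (simp_all add: res2_zero res2_one)
  ultimately show ?thesis using two_power_dvd_diff_iff[of 1 a 0] two_power_dvd_diff_iff[of 1 a 1] by auto
qed

section \<open>Polynomials: congruences and Taylor expansion\<close>

lemma poly_diff_dvd: "(a - b) dvd (poly p a - poly p (b::'a::comm_ring_1))"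
proof (induction p)
  case 0
  then show ?case by simp
next
  case (pCons c p)
  have "poly (pCons c p) a - poly (pCons c p) b = a * (poly p a - poly p b) + (a - b) * poly p b"
    by (simp add: algebra_simps)
  then show ?case using pCons.IH by simp
qed

lemma res2_poly_cong: "res2 m a = res2 m b \<Longrightarrow> res2 m (poly p a) = res2 m (poly p b)"
  using poly_diff_dvd[of a b p] by (meson dvd_trans two_power_dvd_diff_iff)

lemma piter_Suc: "piter f (Suc s) = pcompose f (piter f s)"
  by (simp add: piter_def)

lemma piter_add: "piter f (a + b) = pcompose (piter f a) (piter f b)"
  by (induction a) (simp_all add: piter_Suc pcompose_assoc, simp add: piter_def pcompose_pCons)

lemma power_Suc_taylor:
  "h ^ 2 dvd ((x + h) ^ Suc i - x ^ Suc i - of_nat (Suc i) * h * x ^ i :: 'a::comm_ring_1)"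
proof (induction i)
  case 0
  then show ?case by simp
next
  case (Suc i)
  then obtain r where "(x + h) ^ Suc i = x ^ Suc i + of_nat (Suc i) * h * x ^ i + h ^ 2 * r"
    by (auto elim!: dvdE simp: algebra_simps)
  then have "(x + h) ^ Suc (Suc i) - x ^ Suc (Suc i) - of_nat (Suc (Suc i)) * h * x ^ Suc i
     = h ^ 2 * (x * r + of_nat (Suc i) * x ^ i + h * r)"
    by (simp only: power_Suc[of "x + h" "Suc i"]) (simp add: algebra_simps power2_eq_square)
  then show ?case by simp
qed

lemma poly_fderiv: "poly (fderiv p) x = (\<Sum>i<degree p. of_nat (Suc i) * coeff p (Suc i) * x ^ i)"
  by (simp add: fderiv_def poly_sum poly_monom)

lemma poly_taylor_dvd: "h ^ 2 dvd (poly p (x + h) - poly p x - h * poly (fderiv p) x)"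
proof (cases "degree p")
  case 0
  then show ?thesis by (simp add: poly_fderiv) (simp add: poly_altdef)
next
  case (Suc d)
  have poly_shift: "poly p y = coeff p 0 + (\<Sum>i<Suc d. coeff p (Suc i) * y ^ Suc i)" for y
    unfolding poly_altdef Suc sum.atMost_Suc_shift lessThan_Suc_atMost by simp
  have "poly p (x + h) - poly p x - h * poly (fderiv p) x =
    (\<Sum>i<Suc d. coeff p (Suc i) * ((x + h) ^ Suc i - x ^ Suc i - of_nat (Suc i) * h * x ^ i))"
    by (simp add: poly_shift poly_fderiv Suc sum_distrib_left algebra_simps sum_subtractf sum.distrib)
  also have "h ^ 2 dvd \<dots>"
    by (intro dvd_sum dvd_mult power_Suc_taylor)
  finally show ?thesis .
qed

lemma poly_taylor:
  obtains r where "poly p (x + h) = poly p x + h * poly (fderiv p) x + h ^ 2 * r"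
  using poly_taylor_dvd[of h p x] by (auto elim!: dvdE simp: algebra_simps)

text \<open>Comparing the expansions of \<open>p \<circ> q\<close> and of \<open>p\<close> after \<open>q\<close> with step \<open>2\<^sup>m\<close> shows that the
two sides agree modulo every \<open>2\<^sup>m\<close>.\<close>

lemma poly_fderiv_pcompose:
  "poly (fderiv (pcompose p q)) z = poly (fderiv p) (poly q z) * poly (fderiv q) z"
proof -
  let ?D = "poly (fderiv (pcompose p q)) z - poly (fderiv p) (poly q z) * poly (fderiv q) z"
  have "2 ^ m dvd ?D" for m
  proof -
    define h :: padic2 where "h = 2 ^ m"
    obtain r0 where r0: "poly (pcompose p q) (z + h) =
        poly (pcompose p q) z + h * poly (fderiv (pcompose p q)) z + h ^ 2 * r0"
      by (rule poly_taylor)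
    obtain r1 where r1: "poly q (z + h) = poly q z + h * poly (fderiv q) z + h ^ 2 * r1"
      by (rule poly_taylor)
    define u where "u = poly (fderiv q) z + h * r1"
    obtain r2 where r2: "poly p (poly q z + h * u) =
        poly p (poly q z) + h * u * poly (fderiv p) (poly q z) + (h * u) ^ 2 * r2"
      by (rule poly_taylor)
    have "poly q (z + h) = poly q z + h * u"
      using r1 by (simp add: u_def algebra_simps power2_eq_square)
    then have "2 ^ m * ?D = 2 ^ m * (h * (r1 * poly (fderiv p) (poly q z) + u ^ 2 * r2 - r0))"
      using r0 r2 by (simp add: poly_pcompose u_def h_def algebra_simps power2_eq_square)
    then show ?thesis by (auto dest: two_power_mult_cancel simp: h_def)
  qed
  then have "?D = 0" by (rule eq_0_if_two_power_dvd)
  then show ?thesis by simp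
qed

section \<open>Displacements of iterates\<close>

lemma displacement_at_lift:
  assumes "poly p z - z = h * B"
  obtains r where
    "poly p (z + h * T) - (z + h * T) = h * (B + T * (poly (fderiv p) z - 1) + h * T ^ 2 * r)"
proof -
  obtain r where "poly p (z + h * T) = poly p z + h * T * poly (fderiv p) z + (h * T) ^ 2 * r"
    by (rule poly_taylor)
  with assms have "poly p (z + h * T) - (z + h * T) = h * (B + T * (poly (fderiv p) z - 1) + h * T ^ 2 * r)"
    by (simp add: algebra_simps power2_eq_square)
  then show ?thesis by (rule that)
qed

lemma displacement_of_second_iterate:
  assumes "poly p y - y = h * c"
  obtains r where "poly p (poly p y) - y = h * c * (1 + poly (fderiv p) y) + h ^ 2 * c ^ 2 * r"
proof -
  obtain r where "poly p (y + h * c) = poly p y + h * c * poly (fderiv p) y + (h * c) ^ 2 * r"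
    by (rule poly_taylor)
  moreover have "poly p y = y + h * c" using assms by (simp add: algebra_simps)
  ultimately show ?thesis
    by (intro that[of r]) (simp add: algebra_simps power2_eq_square)
qed

lemma fderiv_odd_if_lifts_not_fixed:
  fixes p :: "padic2 poly"
  assumes "1 \<le> n" and "2 ^ n dvd poly p z - z"
    and "\<not> 2 ^ Suc n dvd poly p z - z" and "\<not> 2 ^ Suc n dvd poly p (z + 2 ^ n) - (z + 2 ^ n)"
  shows "2 dvd poly (fderiv p) z - 1"
proof (rule ccontr)
  assume "\<not> 2 dvd poly (fderiv p) z - 1"
  then obtain c where c: "poly (fderiv p) z = 2 * c" using even_or_odd_padic2 by blast
  obtain B where B: "poly p z - z = 2 ^ n * B" using assms(2) by blast
  have "\<not> 2 dvd B"
  proof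
    assume "2 dvd B"
    then obtain b where "B = 2 * b" ..
    with B assms(3) show False by (metis power_Suc2 mult.assoc dvd_triv_left)
  qed
  then obtain b where b: "B = 1 + 2 * b"
    using even_or_odd_padic2[of B] by (auto elim!: dvdE simp: algebra_simps)
  obtain r where r: "poly p (z + 2 ^ n * 1) - (z + 2 ^ n * 1) =
      2 ^ n * (B + 1 * (poly (fderiv p) z - 1) + 2 ^ n * 1 ^ 2 * r)"
    using B by (rule displacement_at_lift)
  obtain m where "n = Suc m" using assms(1) by (cases n) auto
  with r b c have "poly p (z + 2 ^ n) - (z + 2 ^ n) = 2 ^ Suc n * (b + c + 2 ^ m * r)"
    by (simp add: algebra_simps)
  with assms(4) show False by simp
qed

lemma fderiv_second_iterate_cong_1:
  fixes p :: "padic2 poly"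
  assumes "4 dvd poly p z - z" and "2 dvd poly (fderiv p) z - 1"
  shows "4 dvd poly (fderiv (pcompose p p)) z - 1"
proof -
  obtain e where e: "poly (fderiv p) z = 1 + 2 * e"
    using assms(2) by (auto elim!: dvdE simp: algebra_simps)
  have "4 dvd poly (fderiv p) (poly p z) - poly (fderiv p) z"
    using assms(1) poly_diff_dvd dvd_trans by blast
  then obtain s where "poly (fderiv p) (poly p z) = 1 + 2 * e + 4 * s"
    using e by (auto elim!: dvdE simp: algebra_simps)
  with e have "poly (fderiv (pcompose p p)) z - 1 = 4 * (e + e * e + s * (1 + 2 * e))"
    by (simp add: poly_fderiv_pcompose algebra_simps)
  then show ?thesis by simp
qed

lemma second_iterate_displacement_cong:
  fixes p :: "padic2 poly" and T :: padic2
  assumes "2 \<le> n" and "2 ^ n dvd poly p z - z" and "2 dvd poly (fderiv p) z - 1"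
  defines "y \<equiv> z + 2 ^ n * T"
  shows "4 dvd 2 * div2pow (poly p (poly p y) - y) (Suc n)
                 - div2pow (poly p z - z) n * (1 + poly (fderiv p) z)"
proof -
  define h :: padic2 where "h = 2 ^ n"
  obtain m where "n = m + 2" using assms(1) by (metis add.commute le_add_diff_inverse)
  define q :: padic2 where "q = 2 ^ m"
  have h4: "h = 4 * q" by (simp add: h_def q_def \<open>n = m + 2\<close> power_add)
  obtain B where B: "poly p z - z = h * B" using assms(2) by (auto simp: h_def)
  obtain e where e: "poly (fderiv p) z = 1 + 2 * e"
    using assms(3) by (auto elim!: dvdE simp: algebra_simps)
  obtain r where r: "poly p y - y = h * (B + T * (poly (fderiv p) z - 1) + h * T ^ 2 * r)"
    using displacement_at_lift[OF B] by (auto simp: y_def h_def)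
  define c where "c = B + T * (poly (fderiv p) z - 1) + h * T ^ 2 * r"
  obtain s where s: "poly (fderiv p) y = poly (fderiv p) z + (y - z) * s"
    using poly_diff_dvd[of y z "fderiv p"] by (auto elim!: dvdE simp: algebra_simps)
  obtain r' where r': "poly p (poly p y) - y = h * c * (1 + poly (fderiv p) y) + h ^ 2 * c ^ 2 * r'"
    using r[folded c_def] by (rule displacement_of_second_iterate)
  define C where "C = c * (1 + e + 2 * q * T * s) + 2 * q * c ^ 2 * r'"
  have "poly p (poly p y) - y = 2 ^ Suc n * C"
    using r' s e by (simp add: C_def y_def h4 flip: h_def) (simp add: algebra_simps power2_eq_square)
  then have "div2pow (poly p (poly p y) - y) (Suc n) = C" by (simp add: div2pow_eq)
  moreover have "div2pow (poly p z - z) n = B" using B by (simp add: div2pow_eq h_def)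
  moreover have "2 * C - B * (1 + poly (fderiv p) z) = 4 * (q * B * T * s + e * T * (1 + e + 2 * q * T * s)
       + 2 * q * T ^ 2 * r * (1 + e + 2 * q * T * s) + q * c ^ 2 * r')"
    unfolding C_def c_def e h4 by (simp add: algebra_simps power2_eq_square)
  ultimately show ?thesis by (metis dvd_triv_left)
qed

section \<open>Growing cycles\<close>

lemma cycle_res2_piter:
  assumes "is_cycle f m K c" and "i < K" and "res2 m z = c i"
  shows "res2 m (poly (piter f s) z) = c ((i + s) mod K)"
proof (induction s)
  case 0
  then show ?case using assms by (simp add: piter_def)
next
  case (Suc s)
  define j where "j = (i + s) mod K"
  have "j < K" using assms(1) by (simp add: j_def is_cycle_def)
  with assms(1) have "res2 m (of_int (c j)) = c j" by (simp add: res2_of_int is_cycle_def)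
  then have "res2 m (poly (piter f s) z) = res2 m (of_int (c j))" using Suc by (simp add: j_def)
  then have "res2 m (poly (piter f (Suc s)) z) = res2 m (poly f (of_int (c j)))"
    unfolding piter_Suc poly_pcompose by (rule res2_poly_cong)
  also have "\<dots> = c (Suc j mod K)" using assms(1) \<open>j < K\<close> by (simp add: is_cycle_def fmod_def)
  also have "Suc j mod K = (i + Suc s) mod K" by (simp add: j_def mod_Suc_eq)
  finally show ?case .
qed

lemma cycle_point_returns:
  assumes "is_cycle f n k x" and "i < k" and "res2 n z = x i"
  shows "2 ^ n dvd poly (piter f k) z - z"
  using cycle_res2_piter[OF assms, of k] assms by (simp add: two_power_dvd_diff_iff)

text \<open>The lift \<open>w\<close> lies on the cycle of length \<open>2k\<close> of \<open>f\<^sub>n\<^sub>+\<^sub>1\<close>, which \<open>f\<^sup>k\<close> moves by half a period.\<close>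

lemma growing_cycle_no_fixed_lift:
  assumes "is_cycle f n k x" and "grows f n k x" and "i < k" and "res2 n w = x i"
  shows "\<not> 2 ^ Suc n dvd poly (piter f k) w - w"
proof
  assume fixed: "2 ^ Suc n dvd poly (piter f k) w - w"
  obtain y where y_cycle: "is_cycle f (Suc n) (2 * k) y" and y_image:
      "y ` {..<2 * k} = {z. 0 \<le> z \<and> z < 2 ^ Suc n \<and> z mod 2 ^ n \<in> x ` {..<k}}"
    using assms(2) by (auto simp: grows_def)
  have "res2 (Suc n) w mod 2 ^ n = x i"
    using assms(4) by (simp add: res2_def digits_mod_two_power)
  then have "res2 (Suc n) w \<in> y ` {..<2 * k}"
    using y_image res2_bounds[of "Suc n" w] assms(3) by auto
  then obtain j where j: "j < 2 * k" "y j = res2 (Suc n) w" by auto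
  have "y ((j + k) mod (2 * k)) = res2 (Suc n) (poly (piter f k) w)"
    using cycle_res2_piter[OF y_cycle j(1)] j(2) by simp
  also have "\<dots> = y j" using fixed j(2) by (simp only: two_power_dvd_diff_iff)
  finally have "(j + k) mod (2 * k) = j"
    using y_cycle j(1) by (auto simp: is_cycle_def inj_on_def)
  moreover have "k \<ge> 1" using assms(1) by (simp add: is_cycle_def)
  ultimately show False using j(1) by (simp add: mod_if split: if_splits)
qed

theorem lemma3p4:
  fixes f :: "padic2 poly" and n k :: nat and x :: "nat \<Rightarrow> int" and X :: "nat \<Rightarrow> padic2"
  assumes "n \<ge> 2"
    and "is_cycle f n k x"
    and "grows f n k x"
    and "\<forall>i<k. res2 n (X i) = x i"
  shows "\<forall>i<k. \<forall>t\<in>{0::nat, 1}.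
    (let a_n = (\<lambda>z. poly (fderiv (piter f k)) z);
         b_n = (\<lambda>z. div2pow (poly (piter f k) z - z) n);
         a_n1 = (\<lambda>z. poly (fderiv (piter f (2 * k))) z);
         b_n1 = (\<lambda>z. div2pow (poly (piter f (2 * k)) z - z) (Suc n))
     in (4 dvd (a_n1 (X i) - 1)) \<and>
        (4 dvd (2 * b_n1 (X i + 2 ^ n * of_nat t) - b_n (X i) * (1 + a_n (X i)))))"
proof (intro allI impI ballI)
  fix i t
  assume "i < k"
  define p where "p = piter f k"
  have on_cycle: "res2 n (X i) = x i" using assms(4) \<open>i < k\<close> by simp
  have "res2 n (X i + 2 ^ n) = res2 n (X i)"
    unfolding two_power_dvd_diff_iff[symmetric] by simp
  then have lift_on_cycle: "res2 n (X i + 2 ^ n) = x i" using on_cycle by simp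
  have returns: "2 ^ n dvd poly p (X i) - X i"
    unfolding p_def using assms(2) \<open>i < k\<close> on_cycle by (rule cycle_point_returns)
  have odd: "2 dvd poly (fderiv p) (X i) - 1"
  proof (rule fderiv_odd_if_lifts_not_fixed[OF _ returns])
    show "1 \<le> n" using assms(1) by simp
    show "\<not> 2 ^ Suc n dvd poly p (X i) - X i"
      unfolding p_def using assms(2,3) \<open>i < k\<close> on_cycle by (rule growing_cycle_no_fixed_lift)
    show "\<not> 2 ^ Suc n dvd poly p (X i + 2 ^ n) - (X i + 2 ^ n)"
      unfolding p_def using assms(2,3) \<open>i < k\<close> lift_on_cycle by (rule growing_cycle_no_fixed_lift)
  qed
  have "(4::padic2) dvd 2 ^ n" using le_imp_power_dvd[OF assms(1), of 2] by simp
  then have "4 dvd poly p (X i) - X i" using returns by (rule dvd_trans)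
  then have "4 dvd poly (fderiv (pcompose p p)) (X i) - 1"
    using odd by (rule fderiv_second_iterate_cong_1)
  moreover have "piter f (2 * k) = pcompose p p" by (simp add: p_def mult_2 piter_add)
  moreover note second_iterate_displacement_cong[OF assms(1) returns odd, of "of_nat t"]
  ultimately show "let a_n = (\<lambda>z. poly (fderiv (piter f k)) z);
         b_n = (\<lambda>z. div2pow (poly (piter f k) z - z) n);
         a_n1 = (\<lambda>z. poly (fderiv (piter f (2 * k))) z);
         b_n1 = (\<lambda>z. div2pow (poly (piter f (2 * k)) z - z) (Suc n))
     in (4 dvd (a_n1 (X i) - 1)) \<and>
        (4 dvd (2 * b_n1 (X i + 2 ^ n * of_nat t) - b_n (X i) * (1 + a_n (X i))))"
    unfolding Let_def p_def[symmetric] by (simp only: poly_pcompose)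
qed

end
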